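(* (1) If $\iota$ is an involution of odd type with patching element $\gamma$, then $\mathcal H\cap\Omega^+_{\mathbb K_\gamma}\neq\emptyset$. (2) If $\iota$ is an involution of even type with patching element $\gamma$, then $\mathcal H\cap\Omega^+_{\mathbb K_\gamma}=\emptyset$.
   Context: $\Lambda=\mathbb U(2)\oplus\mathbb U\oplus\mathbb E_8(2)$; $\Omega_\Lambda^+$ a fixed component of $\{[\omega]\in\mathbf P(\Lambda\otimes\mathbb C):\omega^2=0,\langle\omega,\bar\omega\rangle>0\}$; for $d\in\Lambda\otimes\mathbb R$, $H_d=\{\omega\in\Omega_\Lambda^+:\langle\omega,d\rangle=0\}$; $\mathcal H=\bigcup_{d\in\Lambda,d^2=-2}H_d$. Setting: $\iota$ is a fixed-point-free involution of $K_{\tau,\tau'}=\mathrm{Km}(E_\tau\times E_{\tau'})$ with $\mathbf K\subset H^2(K_{\tau,\tau'},\mathbb Z)_-$ ($\mathbf K\cong\mathbb U(2)\oplus\mathbb U(2)$ the image of $H^1(E_\tau,\mathbb Z)\otimes H^1(E_{\tau'},\mathbb Z)$), $\alpha$ a marking with $\alpha(H^2_-)=\Lambda$ and period in $\Omega_\Lambda^+$, $\mathbb K_\gamma=\alpha(\mathbf K)$, $\mathbb E_\gamma$ the orthogonal complement of $\mathbb K_\gamma$ in $\Lambda$ ($\cong\mathbb E_8(2)$), and $\Omega^+_{\mathbb K_\gamma}=\{[\omega]\in\Omega^+_\Lambda:\omega\in\mathbb K_\gamma\otimes\mathbb C\}$. Writing $\Lambda=\mathbb Z(d_1+d_2)+\mathbb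 K_\gamma\oplus\mathbb E_\gamma$ with $d_1\in\mathbb K_\gamma^\vee\setminus\mathbb K_\gamma$, $d_2\in\mathbb E_\gamma^\vee\setminus\mathbb E_\gamma$, the patching element is $\gamma=\bar d_1\in A_{\mathbf K}$, and $\iota$ is of odd (resp. even) type if $q_{\mathbf K}(\gamma)=1$ (resp. $0$) in $\mathbb Z/2$. *)

theory Defs
  imports "HOL-Analysis.Analysis"
begin

text \<open>Signature convention: Lambda has signature (2,10), so E8(2) is the NEGATIVE definite
 E8 root lattice with form scaled by 2 (Gram = 2 * (minus Cartan matrix)).
 E8 Dynkin diagram (Bourbaki labels 1..8 shifted to 0..7): edges 0-2, 2-3, 3-4, 4-5, 5-6, 6-7, 1-3.\<close>

definition E8_edge :: "nat \<Rightarrow> nat \<Rightarrow> bool" where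
  "E8_edge i j = ({i, j} \<in> {{0,2},{2,3},{3,4},{4,5},{5,6},{6,7},{1,3}})"

definition E8m2_gram :: "nat \<Rightarrow> nat \<Rightarrow> int" where
  "E8m2_gram i j = (if i = j then -4 else if E8_edge i j then 2 else 0)"

definition U_gram :: "nat \<Rightarrow> nat \<Rightarrow> int" where
  "U_gram i j = (if i \<noteq> j then 1 else 0)"   \<comment> \<open>for i, j < 2\<close>

definition Lam_gram :: "nat \<Rightarrow> nat \<Rightarrow> int" where
  "Lam_gram i j =
     (if i < 2 \<and> j < 2 then 2 * U_gram i j
      else if 2 \<le> i \<and> i < 4 \<and> 2 \<le> j \<and> j < 4 then U_gram (i - 2) (j - 2)
      else if 4 \<le> i \<and> i < 12 \<and> 4 \<le> j \<and> j < 12 then E8m2_gram (i - 4) (j - 4)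
      else 0)"

definition U2U2_gram :: "nat \<Rightarrow> nat \<Rightarrow> int" where
  "U2U2_gram i j = (if {i, j} = {0, 1} \<or> {i, j} = {2, 3} then 2 else 0)"

text \<open>Bilinear extension of the form of Lambda to coefficients in any commutative ring
 (vectors are functions nat => 'a, only coordinates 0..11 matter).\<close>
definition bil :: "(nat \<Rightarrow> 'a::comm_ring_1) \<Rightarrow> (nat \<Rightarrow> 'a) \<Rightarrow> 'a" where
  "bil x y = (\<Sum>i<12. \<Sum>j<12. x i * of_int (Lam_gram i j) * y j)"

definition Lam :: "(nat \<Rightarrow> int) set" where
  "Lam = {x. \<forall>i\<ge>12. x i = 0}"

definition ofv :: "(nat \<Rightarrow> int) \<Rightarrow> (nat \<Rightarrow> 'a::ring_1)" where
  "ofv x = (\<lambda>t. of_int (x t))"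

definition span_coef :: "nat \<Rightarrow> (nat \<Rightarrow> nat \<Rightarrow> int) \<Rightarrow> (nat \<Rightarrow> 'a::ring_1) set" where
  "span_coef n b = {x. \<exists>c. x = (\<lambda>t. \<Sum>i<n. c i * of_int (b i t))}"

definition zspan :: "nat \<Rightarrow> (nat \<Rightarrow> nat \<Rightarrow> int) \<Rightarrow> (nat \<Rightarrow> int) set" where
  "zspan n b = span_coef n b"

definition orth_compl :: "(nat \<Rightarrow> int) set \<Rightarrow> (nat \<Rightarrow> int) set" where
  "orth_compl S = {x \<in> Lam. \<forall>y\<in>S. bil x y = 0}"

text \<open>The patching data: K_gamma = zspan 4 k with Gram U(2)+U(2); E_gamma = its orthogonal
 complement in Lambda, = zspan 8 e with Gram E8(2); d1 in K^dual minus K,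
 d2 in E^dual minus E (rational vectors in Lambda tensor Q), and
 Lambda = Z(d1+d2) + K_gamma + E_gamma.\<close>
definition patching_setup ::
  "(nat \<Rightarrow> nat \<Rightarrow> int) \<Rightarrow> (nat \<Rightarrow> nat \<Rightarrow> int) \<Rightarrow> (nat \<Rightarrow> rat) \<Rightarrow> (nat \<Rightarrow> rat) \<Rightarrow> bool" where
  "patching_setup k e d1 d2 \<longleftrightarrow>
     (\<forall>i<4. k i \<in> Lam) \<and> (\<forall>i<4. \<forall>j<4. bil (k i) (k j) = U2U2_gram i j) \<and>
     (\<forall>i<8. e i \<in> Lam) \<and> (\<forall>i<8. \<forall>j<8. bil (e i) (e j) = E8m2_gram i j) \<and>
     orth_compl (zspan 4 k) = zspan 8 e \<and>
     d1 \<in> span_coef 4 k \<and> (\<forall>y\<in>zspan 4 k. bil d1 (ofv y) \<in> \<int>) \<and> d1 \<notin> ofv ` zspan 4 k \<and>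
     d2 \<in> span_coef 8 e \<and> (\<forall>y\<in>zspan 8 e. bil d2 (ofv y) \<in> \<int>) \<and> d2 \<notin> ofv ` zspan 8 e \<and>
     ofv ` Lam = {(\<lambda>t. of_int n * (d1 t + d2 t) + of_int (y t) + of_int (z t)) | n y z.
                   y \<in> zspan 4 k \<and> z \<in> zspan 8 e}"

text \<open>q_K(gamma) = d1^2 mod 2Z: odd type iff it is 1 in Z/2, even type iff it is 0.\<close>
definition odd_type :: "(nat \<Rightarrow> rat) \<Rightarrow> bool" where
  "odd_type d1 \<longleftrightarrow> (\<exists>m::int. bil d1 d1 = of_int (2 * m + 1))"

definition even_type :: "(nat \<Rightarrow> rat) \<Rightarrow> bool" where
  "even_type d1 \<longleftrightarrow> (\<exists>m::int. bil d1 d1 = of_int (2 * m))"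

section \<open>Period domain (affine cone over Omega_Lambda), K-part, and the hyperplanes H_d\<close>

definition Omega_cone :: "(nat \<Rightarrow> complex) set" where
  "Omega_cone = {w. (\<forall>i\<ge>12. w i = 0) \<and> bil w w = 0 \<and> 0 < Re (bil w (\<lambda>t. cnj (w t)))}"

definition Omega_Kpart :: "(nat \<Rightarrow> nat \<Rightarrow> int) \<Rightarrow> (nat \<Rightarrow> complex) set" where
  "Omega_Kpart k = span_coef 4 k"

definition Hyp_union :: "(nat \<Rightarrow> complex) set" where
  "Hyp_union = {w. \<exists>d\<in>Lam. bil d d = -2 \<and> bil w (ofv d) = 0}"

end

theory Submission
  imports Defs
begin

text \<open>
  In the bases k of K and e of E write d1 = a/2 and d2 = m/2 with a, m integral. Then
  d1^2 = a0 a1 + a2 a3, the form of E is -4 Q with Q the E8 form in simple-root coordinates,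
  and the evenness of Lambda applied to d1 + d2 gives Q(m) = d1^2 mod 2. Every vector of Lambda
  has coordinates (q/2, p/2) with q = n a + 2 y and p = n m + 2 z for integers n, y, z.

  Odd type: Q(m) is odd, so the class of m mod 2 contains an E8 root r, and the class of a
  contains some A with A0 A1 + A2 A3 = -1; then d = (A/2, r/2) is a (-2)-vector of Lambda.
  As A/2 is negative in K, of signature (2,2), its orthogonal complement in K contains a positive
  plane, which yields a period in K (x) C orthogonal to d. The period domain has two components,
  exchanged by complex conjugation, so this period or its conjugate lies in the component of w0.

  Even type: let a period in K (x) C be orthogonal to a (-2)-vector d = (q/2, p/2). Then q/2 is
  orthogonal to the positive plane spanned by the real and imaginary parts of the period, so it is
  zero or negative. If n is even, d^2 is divisible by 4. If n is odd, q has an odd entry, so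
  (q/2)^2 = q0 q1 + q2 q3 is negative, and it is even because d1^2 is; hence it is at most -2,
  which forces Q(p) = 0, p = 0 and m even, contradicting d2 \<notin> E.
\<close>

section \<open>The form of Lambda\<close>

lemma bil_expand:
  "bil x y = 2 * (x 0 * y 1 + x 1 * y 0) + (x 2 * y 3 + x 3 * y 2)
    - 4 * (x 4 * y 4 + x 5 * y 5 + x 6 * y 6 + x 7 * y 7 + x 8 * y 8 + x 9 * y 9 + x 10 * y 10 + x 11 * y 11)
    + 2 * (x 4 * y 6 + x 6 * y 4 + x 6 * y 7 + x 7 * y 6 + x 7 * y 8 + x 8 * y 7 + x 8 * y 9 + x 9 * y 8
         + x 9 * y 10 + x 10 * y 9 + x 10 * y 11 + x 11 * y 10 + x 5 * y 7 + x 7 * y 5)"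
  by (simp add: bil_def Lam_gram_def U_gram_def E8m2_gram_def E8_edge_def eval_nat_numeral
       insert_commute doubleton_eq_iff algebra_simps)

lemma bil_sym: "bil x y = bil y x"
  by (simp add: bil_expand algebra_simps)

lemma bil_add_left: "bil (\<lambda>t. x t + y t) z = bil x z + bil y z"
  and bil_add_right: "bil z (\<lambda>t. x t + y t) = bil z x + bil z y"
  and bil_diff_left: "bil (\<lambda>t. x t - y t) z = bil x z - bil y z"
  and bil_diff_right: "bil z (\<lambda>t. x t - y t) = bil z x - bil z y"
  and bil_scale_left: "bil (\<lambda>t. a * x t) z = a * bil x z"
  and bil_scale_right: "bil z (\<lambda>t. a * x t) = a * bil z x"
  and bil_zero_left: "bil (\<lambda>t. 0) z = 0"
  and bil_zero_right: "bil z (\<lambda>t. 0) = 0"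
  by (simp_all add: bil_expand algebra_simps)

lemma bil_minus_right: "bil z (\<lambda>t. - x t) = - bil z x"
  using bil_scale_right[of z "-1" x] by simp

lemma bil_sum_left: "bil (\<lambda>t. \<Sum>i<(n::nat). f i t) y = (\<Sum>i<n. bil (f i) y)"
  by (induction n) (simp_all add: bil_add_left bil_zero_left)

lemma bil_sum_right: "bil y (\<lambda>t. \<Sum>i<(n::nat). f i t) = (\<Sum>i<n. bil y (f i))"
  by (induction n) (simp_all add: bil_add_right bil_zero_right)

lemma bil_of_int: "bil (\<lambda>t. of_int (x t)) (\<lambda>t. of_int (y t)) = of_int (bil x y)"
  and bil_of_real: "bil (\<lambda>t. (of_real (x'' t) :: complex)) (\<lambda>t. of_real (y'' t)) = of_real (bil x'' y'')"
  and bil_cnj: "bil (\<lambda>t. cnj (z t)) (\<lambda>t. cnj (z' t)) = cnj (bil z z')"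
  by (simp_all add: bil_expand)

lemma bil_complex:
  "bil (\<lambda>t. complex_of_real (X t) + \<i> * complex_of_real (Y t))
       (\<lambda>t. complex_of_real (X' t) + \<i> * complex_of_real (Y' t))
   = complex_of_real (bil X X' - bil Y Y') + \<i> * complex_of_real (bil X Y' + bil Y X')"
  by (simp only: bil_add_left bil_add_right bil_scale_left bil_scale_right bil_of_real)
    (simp add: algebra_simps)

lemma even_bil_self: "even (bil x x)" for x :: "nat \<Rightarrow> int"
proof -
  have "bil x x = 2 * (2 * x 0 * x 1 + x 2 * x 3
    - 2 * (x 4 * x 4 + x 5 * x 5 + x 6 * x 6 + x 7 * x 7 + x 8 * x 8 + x 9 * x 9 + x 10 * x 10 + x 11 * x 11)
    + 2 * (x 4 * x 6 + x 6 * x 7 + x 7 * x 8 + x 8 * x 9 + x 9 * x 10 + x 10 * x 11 + x 5 * x 7))"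
    by (simp add: bil_expand algebra_simps)
  thus ?thesis by simp
qed

section \<open>Coordinates\<close>

definition lincomb :: "nat \<Rightarrow> (nat \<Rightarrow> 'a::ring_1) \<Rightarrow> (nat \<Rightarrow> nat \<Rightarrow> int) \<Rightarrow> nat \<Rightarrow> 'a" where
  "lincomb n c b = (\<lambda>t. \<Sum>i<n. c i * of_int (b i t))"

lemma span_coef_eq_range: "span_coef n b = range (\<lambda>c. lincomb n c b)"
  unfolding span_coef_def lincomb_def by auto

lemma zspan_eq_range: "zspan n b = range (\<lambda>c. lincomb n c b)"
  unfolding zspan_def span_coef_eq_range ..

lemma lincomb_cong: "(\<And>i. i < n \<Longrightarrow> c i = c' i) \<Longrightarrow> lincomb n c b = lincomb n c' b"
  unfolding lincomb_def by (rule ext) (rule sum.cong, auto)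

lemma of_int_lincomb: "(of_int (lincomb n c b t) :: 'a::ring_1) = lincomb n (\<lambda>i. of_int (c i)) b t"
  and of_rat_lincomb: "(of_rat (lincomb n c' b t) :: 'b::field_char_0) = lincomb n (\<lambda>i. of_rat (c' i)) b t"
  and cnj_lincomb: "cnj (lincomb n c'' b t) = lincomb n (\<lambda>i. cnj (c'' i)) b t"
  by (simp_all add: lincomb_def of_rat_sum of_rat_mult)

lemma ofv_lincomb: "ofv (lincomb n c b) = lincomb n (\<lambda>i. of_int (c i)) b"
  unfolding ofv_def by (simp add: of_int_lincomb)

lemma lincomb_scale: "(\<lambda>t. x * lincomb n c b t) = lincomb n (\<lambda>i. x * c i) b"
  unfolding lincomb_def by (simp add: sum_distrib_left algebra_simps)

lemma lincomb_basis: "j < n \<Longrightarrow> b j = lincomb n (\<lambda>i. if i = j then 1 else 0) b"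
  unfolding lincomb_def by (rule ext) (simp add: mult_delta_left)

lemma lincomb_outside: "\<forall>i<n. b i \<in> Lam \<Longrightarrow> 12 \<le> t \<Longrightarrow> lincomb n c b t = 0"
  unfolding lincomb_def Lam_def by simp

lemma bil_lincomb:
  "bil (lincomb n c b) (lincomb m c' b') = (\<Sum>i<n. \<Sum>j<m. c i * c' j * of_int (bil (b i) (b' j)))"
  unfolding lincomb_def bil_sum_left bil_sum_right
  by (simp only: bil_scale_left bil_scale_right bil_of_int) (simp add: mult_ac)

lemma of_int_div_2: "even x \<Longrightarrow> (of_int (x div 2) :: 'a::field_char_0) = of_int x / 2"
  by (elim evenE) simp

lemma zero_in_zspan: "(\<lambda>t. 0) \<in> zspan n b"
  unfolding zspan_eq_range by (rule range_eqI[of _ _ "\<lambda>i. 0"]) (simp add: lincomb_def fun_eq_iff)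

lemma half_lincomb_in_ofv_zspan:
  assumes "\<forall>i<n. even (c i)"
  shows "(lincomb n (\<lambda>i. of_int (c i) / 2) b :: nat \<Rightarrow> 'a::field_char_0) \<in> ofv ` zspan n b"
proof -
  have "lincomb n (\<lambda>i. of_int (c i) / 2) b = (ofv (lincomb n (\<lambda>i. c i div 2) b) :: nat \<Rightarrow> 'a)"
    unfolding ofv_lincomb using assms by (intro lincomb_cong) (simp add: of_int_div_2)
  thus ?thesis unfolding zspan_eq_range by blast
qed

section \<open>The E8 form\<close>

text \<open>Half the norm of E8 in simple-root coordinates, with the Dynkin labels of E8_edge.\<close>

definition E8_quad :: "(nat \<Rightarrow> 'a::comm_ring_1) \<Rightarrow> 'a" where
  "E8_quad m = m 0 * m 0 + m 1 * m 1 + m 2 * m 2 + m 3 * m 3 + m 4 * m 4 + m 5 * m 5 + m 6 * m 6 + m 7 * m 7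
     - (m 0 * m 2 + m 2 * m 3 + m 3 * m 4 + m 4 * m 5 + m 5 * m 6 + m 6 * m 7 + m 1 * m 3)"

lemma E8_quad_sos:
  fixes x :: "nat \<Rightarrow> 'a::linordered_field"
  shows "E8_quad x = (x 0 - x 2 / 2)\<^sup>2 + (x 1 - x 3 / 2)\<^sup>2 + 3/4 * (x 2 - 2/3 * x 3)\<^sup>2
    + 5/12 * (x 3 - 6/5 * x 4)\<^sup>2 + 2/5 * (x 4 - 5/4 * x 5)\<^sup>2 + 3/8 * (x 5 - 4/3 * x 6)\<^sup>2
    + 1/3 * (x 6 - 3/2 * x 7)\<^sup>2 + 1/4 * (x 7)\<^sup>2"
  by (simp add: E8_quad_def power2_eq_square field_simps)

lemma E8_quad_nonneg: "0 \<le> E8_quad x" for x :: "nat \<Rightarrow> 'a::linordered_field"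
  unfolding E8_quad_sos by (intro add_nonneg_nonneg mult_nonneg_nonneg) auto

lemma E8_quad_le_0_imp_zero:
  fixes x :: "nat \<Rightarrow> 'a::linordered_field"
  assumes "E8_quad x \<le> 0" and "i < 8"
  shows "x i = 0"
proof -
  let ?a = "(x 0 - x 2 / 2)\<^sup>2" and ?b = "(x 1 - x 3 / 2)\<^sup>2" and ?c = "3/4 * (x 2 - 2/3 * x 3)\<^sup>2"
  let ?d = "5/12 * (x 3 - 6/5 * x 4)\<^sup>2" and ?e = "2/5 * (x 4 - 5/4 * x 5)\<^sup>2"
  let ?f = "3/8 * (x 5 - 4/3 * x 6)\<^sup>2" and ?g = "1/3 * (x 6 - 3/2 * x 7)\<^sup>2" and ?h = "1/4 * (x 7)\<^sup>2"
  have "?a \<ge> 0" "?b \<ge> 0" "?c \<ge> 0" "?d \<ge> 0" "?e \<ge> 0" "?f \<ge> 0" "?g \<ge> 0" "?h \<ge> 0"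
    by auto
  moreover have "?a + ?b + ?c + ?d + ?e + ?f + ?g + ?h \<le> 0"
    using assms(1) unfolding E8_quad_sos .
  ultimately have "?a = 0 \<and> ?b = 0 \<and> ?c = 0 \<and> ?d = 0 \<and> ?e = 0 \<and> ?f = 0 \<and> ?g = 0 \<and> ?h = 0"
    by linarith
  hence "x 7 = 0 \<and> x 6 = 0 \<and> x 5 = 0 \<and> x 4 = 0 \<and> x 3 = 0 \<and> x 2 = 0 \<and> x 1 = 0 \<and> x 0 = 0"
    by simp
  with assms(2) show ?thesis
    by (auto simp: less_Suc_eq numeral_eq_Suc)
qed

lemma E8_quad_half: "E8_quad (\<lambda>i. (of_int (p i) :: 'a::field_char_0) / 2) = of_int (E8_quad p) / 4"
  by (simp add: E8_quad_def field_simps)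

lemma E8_quad_mod_2:
  fixes m m' :: "nat \<Rightarrow> int"
  assumes "\<And>i. i < 8 \<Longrightarrow> m i mod 2 = m' i mod 2"
  shows "E8_quad m mod 2 = E8_quad m' mod 2"
  unfolding E8_quad_def by (intro mod_diff_cong mod_add_cong mod_mult_cong) (simp_all add: assms)

text \<open>The 120 positive roots in simple-root coordinates, listed in the order of their residues
  mod 2 read as binary numbers with the first coordinate least significant, so that the
  residue lemma below is a single list comparison.\<close>

definition E8_positive_roots :: "int list list" where
  "E8_positive_roots =
    [[1, 0, 0, 0, 0, 0, 0, 0], [0, 1, 0, 0, 0, 0, 0, 0], [0, 0, 1, 0, 0, 0, 0, 0], [1, 0, 1, 0, 0, 0, 0, 0], [0, 0, 0, 1, 0, 0, 0, 0],
     [0, 1, 0, 1, 0, 0, 0, 0], [0, 0, 1, 1, 0, 0, 0, 0], [1, 0, 1, 1, 0, 0, 0, 0], [0, 1, 1, 1, 0, 0, 0, 0], [1, 1, 1, 1, 0, 0, 0, 0],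
     [0, 0, 0, 0, 1, 0, 0, 0], [1, 1, 2, 2, 1, 0, 0, 0], [0, 1, 1, 2, 1, 0, 0, 0], [1, 1, 1, 2, 1, 0, 0, 0], [0, 0, 0, 1, 1, 0, 0, 0],
     [0, 1, 0, 1, 1, 0, 0, 0], [0, 0, 1, 1, 1, 0, 0, 0], [1, 0, 1, 1, 1, 0, 0, 0], [0, 1, 1, 1, 1, 0, 0, 0], [1, 1, 1, 1, 1, 0, 0, 0],
     [0, 0, 0, 0, 0, 1, 0, 0], [1, 1, 2, 2, 2, 1, 0, 0], [0, 1, 1, 2, 2, 1, 0, 0], [1, 1, 1, 2, 2, 1, 0, 0], [1, 2, 2, 3, 2, 1, 0, 0],
     [1, 1, 2, 3, 2, 1, 0, 0], [0, 0, 0, 0, 1, 1, 0, 0], [1, 1, 2, 2, 1, 1, 0, 0], [0, 1, 1, 2, 1, 1, 0, 0], [1, 1, 1, 2, 1, 1, 0, 0],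
     [0, 0, 0, 1, 1, 1, 0, 0], [0, 1, 0, 1, 1, 1, 0, 0], [0, 0, 1, 1, 1, 1, 0, 0], [1, 0, 1, 1, 1, 1, 0, 0], [0, 1, 1, 1, 1, 1, 0, 0],
     [1, 1, 1, 1, 1, 1, 0, 0], [0, 0, 0, 0, 0, 0, 1, 0], [1, 1, 2, 2, 2, 2, 1, 0], [0, 1, 1, 2, 2, 2, 1, 0], [1, 1, 1, 2, 2, 2, 1, 0],
     [1, 2, 2, 3, 2, 2, 1, 0], [1, 1, 2, 3, 2, 2, 1, 0], [1, 2, 2, 4, 3, 2, 1, 0], [2, 3, 4, 6, 5, 4, 3, 2], [2, 2, 3, 4, 3, 2, 1, 0],
     [1, 2, 3, 4, 3, 2, 1, 0], [1, 2, 2, 3, 3, 2, 1, 0], [1, 1, 2, 3, 3, 2, 1, 0], [0, 0, 0, 0, 0, 1, 1, 0], [1, 1, 2, 2, 2, 1, 1, 0],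
     [0, 1, 1, 2, 2, 1, 1, 0], [1, 1, 1, 2, 2, 1, 1, 0], [1, 2, 2, 3, 2, 1, 1, 0], [1, 1, 2, 3, 2, 1, 1, 0], [0, 0, 0, 0, 1, 1, 1, 0],
     [1, 1, 2, 2, 1, 1, 1, 0], [0, 1, 1, 2, 1, 1, 1, 0], [1, 1, 1, 2, 1, 1, 1, 0], [0, 0, 0, 1, 1, 1, 1, 0], [0, 1, 0, 1, 1, 1, 1, 0],
     [0, 0, 1, 1, 1, 1, 1, 0], [1, 0, 1, 1, 1, 1, 1, 0], [0, 1, 1, 1, 1, 1, 1, 0], [1, 1, 1, 1, 1, 1, 1, 0], [0, 0, 0, 0, 0, 0, 0, 1],
     [1, 1, 2, 2, 2, 2, 2, 1], [0, 1, 1, 2, 2, 2, 2, 1], [1, 1, 1, 2, 2, 2, 2, 1], [1, 2, 2, 3, 2, 2, 2, 1], [1, 1, 2, 3, 2, 2, 2, 1],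
     [1, 2, 2, 4, 3, 2, 2, 1], [2, 3, 4, 6, 5, 4, 2, 1], [2, 2, 3, 4, 3, 2, 2, 1], [1, 2, 3, 4, 3, 2, 2, 1], [1, 2, 2, 3, 3, 2, 2, 1],
     [1, 1, 2, 3, 3, 2, 2, 1], [1, 2, 2, 4, 4, 3, 2, 1], [2, 3, 4, 6, 4, 3, 2, 1], [2, 2, 3, 4, 4, 3, 2, 1], [1, 2, 3, 4, 4, 3, 2, 1],
     [2, 2, 4, 5, 4, 3, 2, 1], [2, 3, 4, 5, 4, 3, 2, 1], [2, 2, 3, 5, 4, 3, 2, 1], [1, 2, 3, 5, 4, 3, 2, 1], [2, 3, 3, 5, 4, 3, 2, 1],
     [1, 3, 3, 5, 4, 3, 2, 1], [1, 2, 2, 4, 3, 3, 2, 1], [2, 3, 4, 6, 5, 3, 2, 1], [2, 2, 3, 4, 3, 3, 2, 1], [1, 2, 3, 4, 3, 3, 2, 1],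
     [1, 2, 2, 3, 3, 3, 2, 1], [1, 1, 2, 3, 3, 3, 2, 1], [0, 0, 0, 0, 0, 0, 1, 1], [1, 1, 2, 2, 2, 2, 1, 1], [0, 1, 1, 2, 2, 2, 1, 1],
     [1, 1, 1, 2, 2, 2, 1, 1], [1, 2, 2, 3, 2, 2, 1, 1], [1, 1, 2, 3, 2, 2, 1, 1], [1, 2, 2, 4, 3, 2, 1, 1], [2, 3, 4, 6, 5, 4, 3, 1],
     [2, 2, 3, 4, 3, 2, 1, 1], [1, 2, 3, 4, 3, 2, 1, 1], [1, 2, 2, 3, 3, 2, 1, 1], [1, 1, 2, 3, 3, 2, 1, 1], [0, 0, 0, 0, 0, 1, 1, 1],
     [1, 1, 2, 2, 2, 1, 1, 1], [0, 1, 1, 2, 2, 1, 1, 1], [1, 1, 1, 2, 2, 1, 1, 1], [1, 2, 2, 3, 2, 1, 1, 1], [1, 1, 2, 3, 2, 1, 1, 1],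
     [0, 0, 0, 0, 1, 1, 1, 1], [1, 1, 2, 2, 1, 1, 1, 1], [0, 1, 1, 2, 1, 1, 1, 1], [1, 1, 1, 2, 1, 1, 1, 1], [0, 0, 0, 1, 1, 1, 1, 1],
     [0, 1, 0, 1, 1, 1, 1, 1], [0, 0, 1, 1, 1, 1, 1, 1], [1, 0, 1, 1, 1, 1, 1, 1], [0, 1, 1, 1, 1, 1, 1, 1], [1, 1, 1, 1, 1, 1, 1, 1]]"

lemma E8_quad_positive_roots: "\<forall>r \<in> set E8_positive_roots. E8_quad (nth r) = 1"
  by code_simp

lemma E8_positive_roots_residues:
  "map (map (\<lambda>x. x mod 2)) E8_positive_roots
   = filter (\<lambda>p. odd (E8_quad (nth p))) (List.n_lists 8 [0, 1])"
  by code_simp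

lemma E8_root_in_odd_class:
  fixes m :: "nat \<Rightarrow> int"
  assumes "odd (E8_quad m)"
  obtains r where "E8_quad r = 1" and "\<forall>i<8. r i mod 2 = m i mod 2"
proof -
  define p where "p = map (\<lambda>i. m i mod 2) [0..<8]"
  have p_nth: "p ! i = m i mod 2" if "i < 8" for i
    using that by (simp add: p_def)
  have "p \<in> set (List.n_lists 8 [0, 1])"
    by (auto simp: set_n_lists p_def)
  moreover have "E8_quad (nth p) mod 2 = E8_quad m mod 2"
    by (rule E8_quad_mod_2) (simp add: p_nth)
  ultimately have "p \<in> set (map (map (\<lambda>x. x mod 2)) E8_positive_roots)"
    using assms unfolding E8_positive_roots_residues by (simp add: odd_iff_mod_2_eq_one)
  then obtain \<rho> where \<rho>: "\<rho> \<in> set E8_positive_roots" "map (\<lambda>x. x mod 2) \<rho> = p"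
    by auto
  show ?thesis
  proof
    show "E8_quad (nth \<rho>) = 1" using \<rho>(1) E8_quad_positive_roots by blast
    have "length \<rho> = 8" using arg_cong[OF \<rho>(2), of length] by (simp add: p_def)
    thus "\<forall>i<8. \<rho> ! i mod 2 = m i mod 2"
      using \<rho>(2) p_nth by (metis nth_map)
  qed
qed

section \<open>The form of U(2) + U(2)\<close>

definition formK :: "(nat \<Rightarrow> 'a::comm_ring_1) \<Rightarrow> (nat \<Rightarrow> 'a) \<Rightarrow> 'a" where
  "formK s t = 2 * (s 0 * t 1 + s 1 * t 0 + s 2 * t 3 + s 3 * t 2)"

lemma formK_sym: "formK s t = formK t s"
  by (simp add: formK_def algebra_simps)

lemma formK_minus_right: "formK s (\<lambda>i. - t i) = - formK s t"
  by (simp add: formK_def)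

lemma formK_half:
  "formK (\<lambda>i. of_int (q i) / 2) (\<lambda>i. of_int (q i) / 2) = (of_int (q 0 * q 1 + q 2 * q 3) :: 'a::field_char_0)"
  by (simp add: formK_def field_simps)

lemma formK_complex:
  "formK \<gamma> \<delta> = complex_of_real (formK (\<lambda>i. Re (\<gamma> i)) (\<lambda>i. Re (\<delta> i)) - formK (\<lambda>i. Im (\<gamma> i)) (\<lambda>i. Im (\<delta> i)))
     + \<i> * complex_of_real (formK (\<lambda>i. Re (\<gamma> i)) (\<lambda>i. Im (\<delta> i)) + formK (\<lambda>i. Im (\<gamma> i)) (\<lambda>i. Re (\<delta> i)))"
  by (simp add: formK_def complex_eq_iff algebra_simps)

lemma formK_gaussian_half:
  "formK (\<lambda>i. of_int (s i) + \<i> * of_int (t i)) (\<lambda>i. of_int (A i) / 2)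
   = (of_int (formK s A) + \<i> * of_int (formK t A)) / 2"
  by (simp add: formK_def field_simps)

lemma formK_self_diagonalized:
  fixes s :: "nat \<Rightarrow> real"
  shows "formK s s = (s 0 + s 1)\<^sup>2 + (s 2 + s 3)\<^sup>2 - (s 0 - s 1)\<^sup>2 - (s 2 - s 3)\<^sup>2"
  by (simp add: formK_def power2_eq_square algebra_simps)

lemma cramer_2x2:
  fixes p1 p2 p3 r1 r2 r3 :: "'a::field"
  assumes "p1 * r2 - r1 * p2 \<noteq> 0"
  obtains \<alpha> \<beta> where "p3 = \<alpha> * p1 + \<beta> * p2" "r3 = \<alpha> * r1 + \<beta> * r2"
proof
  define \<delta> where "\<delta> = p1 * r2 - r1 * p2"
  have "(p3 * r2 - r3 * p2) * p1 + (p1 * r3 - r1 * p3) * p2 = p3 * \<delta>"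
    "(p3 * r2 - r3 * p2) * r1 + (p1 * r3 - r1 * p3) * r2 = r3 * \<delta>"
    by (simp_all add: \<delta>_def algebra_simps)
  with assms show "p3 = (p3 * r2 - r3 * p2) / \<delta> * p1 + (p1 * r3 - r1 * p3) / \<delta> * p2"
    "r3 = (p3 * r2 - r3 * p2) / \<delta> * r1 + (p1 * r3 - r1 * p3) / \<delta> * r2"
    by (simp_all add: \<delta>_def add_divide_distrib [symmetric] nonzero_eq_divide_eq)
qed

text \<open>K has signature (2,2): formK s s is (p s)^2 + (r s)^2 minus a sum of squares, where
  p s = s0 + s1 and r s = s2 + s3. On the positive plane spanned by x and y the map (p, r) is
  injective, so some combination z of x and y has p z = p u and r z = r u, and then
  formK (u - z) (u - z) \<le> 0.\<close>

lemma formK_neg_on_orth_of_pos_plane: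
  fixes x y u :: "nat \<Rightarrow> real"
  assumes xx: "formK x x > 0" and yy: "formK y y = formK x x" and xy: "formK x y = 0"
    and xu: "formK x u = 0" and yu: "formK y u = 0"
  shows "formK u u < 0 \<or> (\<forall>i<4. u i = 0)"
proof -
  define a where "a = formK x x"
  define p :: "(nat \<Rightarrow> real) \<Rightarrow> real" where "p s = s 0 + s 1" for s
  define r :: "(nat \<Rightarrow> real) \<Rightarrow> real" where "r s = s 2 + s 3" for s
  have a_pos: "a > 0" using xx by (simp add: a_def)
  have bound: "(\<alpha>\<^sup>2 + \<beta>\<^sup>2) * a + \<gamma>\<^sup>2 * formK u u
      \<le> (\<alpha> * p x + \<beta> * p y + \<gamma> * p u)\<^sup>2 + (\<alpha> * r x + \<beta> * r y + \<gamma> * r u)\<^sup>2" for \<alpha> \<beta> \<gamma>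
  proof -
    define z where "z i = \<alpha> * x i + \<beta> * y i + \<gamma> * u i" for i
    have "formK z z = \<alpha>\<^sup>2 * formK x x + \<beta>\<^sup>2 * formK y y + \<gamma>\<^sup>2 * formK u u
        + 2 * \<alpha> * \<beta> * formK x y + 2 * \<alpha> * \<gamma> * formK x u + 2 * \<beta> * \<gamma> * formK y u"
      by (simp add: z_def formK_def power2_eq_square algebra_simps)
    hence "formK z z = (\<alpha>\<^sup>2 + \<beta>\<^sup>2) * a + \<gamma>\<^sup>2 * formK u u"
      using yy xy xu yu by (simp add: a_def algebra_simps)
    moreover have "formK z z \<le> (p z)\<^sup>2 + (r z)\<^sup>2"
      unfolding formK_self_diagonalized p_def r_def by simp
    ultimately show ?thesis by (simp add: z_def p_def r_def algebra_simps)
  qed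
  have plane_zero: "\<alpha> = 0 \<and> \<beta> = 0"
    if "\<alpha> * p x + \<beta> * p y = 0" "\<alpha> * r x + \<beta> * r y = 0" for \<alpha> \<beta>
  proof -
    have "(\<alpha>\<^sup>2 + \<beta>\<^sup>2) * a \<le> 0" using bound[of \<alpha> \<beta> 0] that by simp
    thus ?thesis using a_pos by (smt (verit) mult_pos_pos sum_power2_gt_zero_iff)
  qed
  define \<delta> where "\<delta> = p x * r y - r x * p y"
  have "\<delta> \<noteq> 0"
  proof
    assume "\<delta> = 0"
    hence "p y = 0 \<and> p x = 0" "r y = 0 \<and> r x = 0"
      using plane_zero[of "p y" "- p x"] plane_zero[of "r y" "- r x"]
      by (simp_all add: \<delta>_def algebra_simps)
    thus False using plane_zero[of 1 0] by simp
  qed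
  then obtain \<alpha> \<beta> where pu: "p u = \<alpha> * p x + \<beta> * p y" and ru: "r u = \<alpha> * r x + \<beta> * r y"
    unfolding \<delta>_def by (rule cramer_2x2)
  have main: "(\<alpha>\<^sup>2 + \<beta>\<^sup>2) * a + formK u u \<le> 0"
    using bound[of "- \<alpha>" "- \<beta>" 1] unfolding pu ru by (simp add: algebra_simps)
  show ?thesis
  proof (cases "formK u u < 0")
    case False
    hence "(\<alpha>\<^sup>2 + \<beta>\<^sup>2) * a \<le> 0" using main by simp
    hence "\<alpha> = 0" "\<beta> = 0" using a_pos by (smt (verit) mult_pos_pos sum_power2_gt_zero_iff)+
    hence "formK u u = 0" "p u = 0" "r u = 0"
      using main False pu ru by simp_all
    hence "(u 0 - u 1)\<^sup>2 + (u 2 - u 3)\<^sup>2 = 0" "u 1 = - u 0" "u 3 = - u 2"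
      unfolding formK_self_diagonalized p_def r_def by (simp_all add: algebra_simps)
    thus ?thesis by (auto simp: less_Suc_eq numeral_eq_Suc)
  qed simp
qed

lemma formK_neg_on_orth_of_period:
  fixes \<gamma> :: "nat \<Rightarrow> complex" and u :: "nat \<Rightarrow> real"
  assumes "formK \<gamma> \<gamma> = 0" and "0 < Re (formK \<gamma> (\<lambda>i. cnj (\<gamma> i)))"
    and "formK \<gamma> (\<lambda>i. complex_of_real (u i)) = 0"
  shows "formK u u < 0 \<or> (\<forall>i<4. u i = 0)"
proof (rule formK_neg_on_orth_of_pos_plane)
  define x y where "x = (\<lambda>i. Re (\<gamma> i))" and "y = (\<lambda>i. Im (\<gamma> i))"
  have "formK x x - formK y y = 0" "formK x y + formK y x = 0"
    using assms(1) unfolding formK_complex[of \<gamma> \<gamma>] by (simp_all add: complex_eq_iff x_def y_def)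
  moreover have "0 < formK x x + formK y y"
    using assms(2) unfolding formK_complex[of \<gamma>] by (simp add: x_def y_def formK_minus_right)
  moreover have "formK x u = 0" "formK y u = 0"
    using assms(3) unfolding formK_complex[of \<gamma>] by (simp_all add: complex_eq_iff x_def y_def formK_def)
  ultimately show "formK x x > 0" "formK y y = formK x x" "formK x y = 0" "formK x u = 0" "formK y u = 0"
    by (simp_all add: formK_sym[of y x])
qed

lemma formK_negative_vector_in_odd_class:
  fixes a :: "nat \<Rightarrow> int"
  assumes "odd (a 0 * a 1 + a 2 * a 3)"
  obtains A s t :: "nat \<Rightarrow> int"
  where "\<forall>i<4. A i mod 2 = a i mod 2" "A 0 * A 1 + A 2 * A 3 = -1"
    "formK s s = 4" "formK t t = 4" "formK s t = 0" "formK s A = 0" "formK t A = 0"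
proof -
  note choice = that
  consider
      "odd (a 0)" "odd (a 1)" "even (a 2)" "even (a 3)"
    | "odd (a 0)" "odd (a 1)" "even (a 2)" "odd (a 3)"
    | "odd (a 0)" "odd (a 1)" "odd (a 2)" "even (a 3)"
    | "even (a 0)" "even (a 1)" "odd (a 2)" "odd (a 3)"
    | "even (a 0)" "odd (a 1)" "odd (a 2)" "odd (a 3)"
    | "odd (a 0)" "even (a 1)" "odd (a 2)" "odd (a 3)"
    using assms by auto
  then show thesis
  proof cases
    case 1
    show ?thesis
      by (rule choice[of "(!) [1,-1,0,0]" "(!) [1,1,0,0]" "(!) [0,0,1,1]"])
        (use 1 in \<open>simp_all add: formK_def All_less_Suc numeral_eq_Suc odd_iff_mod_2_eq_one[symmetric]\<close>)
  next
    case 2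
    show ?thesis
      by (rule choice[of "(!) [1,-1,0,1]" "(!) [1,1,0,0]" "(!) [1,-1,2,1]"])
        (use 2 in \<open>simp_all add: formK_def All_less_Suc numeral_eq_Suc odd_iff_mod_2_eq_one[symmetric]\<close>)
  next
    case 3
    show ?thesis
      by (rule choice[of "(!) [1,-1,1,0]" "(!) [1,1,0,0]" "(!) [1,-1,1,2]"])
        (use 3 in \<open>simp_all add: formK_def All_less_Suc numeral_eq_Suc odd_iff_mod_2_eq_one[symmetric]\<close>)
  next
    case 4
    show ?thesis
      by (rule choice[of "(!) [0,0,1,-1]" "(!) [0,0,1,1]" "(!) [1,1,0,0]"])
        (use 4 in \<open>simp_all add: formK_def All_less_Suc numeral_eq_Suc odd_iff_mod_2_eq_one[symmetric]\<close>)
  next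
    case 5
    show ?thesis
      by (rule choice[of "(!) [0,1,1,-1]" "(!) [0,0,1,1]" "(!) [2,1,1,-1]"])
        (use 5 in \<open>simp_all add: formK_def All_less_Suc numeral_eq_Suc odd_iff_mod_2_eq_one[symmetric]\<close>)
  next
    case 6
    show ?thesis
      by (rule choice[of "(!) [1,0,1,-1]" "(!) [0,0,1,1]" "(!) [1,2,1,-1]"])
        (use 6 in \<open>simp_all add: formK_def All_less_Suc numeral_eq_Suc odd_iff_mod_2_eq_one[symmetric]\<close>)
  qed
qed

section \<open>The period domain\<close>

lemma Omega_cone_cnj: "w \<in> Omega_cone \<Longrightarrow> (\<lambda>t. cnj (w t)) \<in> Omega_cone"
  unfolding Omega_cone_def by (simp add: bil_cnj bil_sym[of "\<lambda>t. cnj (w t)" w])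

lemma Omega_cone_scale:
  assumes "w \<in> Omega_cone" "\<alpha> \<noteq> 0"
  shows "(\<lambda>t. \<alpha> * w t) \<in> Omega_cone"
proof -
  have "bil (\<lambda>t. \<alpha> * w t) (\<lambda>t. cnj (\<alpha> * w t)) = (\<alpha> * cnj \<alpha>) * bil w (\<lambda>t. cnj (w t))"
    by (simp add: bil_scale_left bil_scale_right)
  also have "\<alpha> * cnj \<alpha> = complex_of_real ((cmod \<alpha>)\<^sup>2)"
    using complex_norm_square[of \<alpha>] by simp
  finally have "Re (bil (\<lambda>t. \<alpha> * w t) (\<lambda>t. cnj (\<alpha> * w t))) = (cmod \<alpha>)\<^sup>2 * Re (bil w (\<lambda>t. cnj (w t)))"
    by simp
  moreover have "(cmod \<alpha>)\<^sup>2 > 0" using assms(2) by simp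
  ultimately show ?thesis
    using assms(1) unfolding Omega_cone_def by (simp add: bil_scale_left bil_scale_right)
qed

lemma connected_component_Omega_cone_scale:
  assumes "w \<in> Omega_cone" "\<alpha> \<noteq> 0"
  shows "connected_component Omega_cone w (\<lambda>t. \<alpha> * w t)"
proof (rule connected_componentI)
  let ?L = "(\<lambda>\<beta>. \<lambda>t. \<beta> * w t) ` (- {0})"
  have "connected (- {0::complex})"
    by (simp add: path_connected_imp_connected path_connected_punctured_universe)
  moreover have "continuous_on (- {0::complex}) (\<lambda>\<beta>. \<lambda>t. \<beta> * w t)"
    by (intro continuous_intros)
  ultimately show "connected ?L"
    by (rule connected_continuous_image[rotated])
  show "?L \<subseteq> Omega_cone" using Omega_cone_scale[OF assms(1)] by auto
  show "w \<in> ?L" by (rule image_eqI[where x=1]) simp_all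
  show "(\<lambda>t. \<alpha> * w t) \<in> ?L" using assms(2) by blast
qed

lemma connected_component_Omega_cone_cnj:
  assumes "connected_component Omega_cone x y"
  shows "connected_component Omega_cone (\<lambda>t. cnj (x t)) (\<lambda>t. cnj (y t))"
proof -
  obtain T where T: "connected T" "T \<subseteq> Omega_cone" "x \<in> T" "y \<in> T"
    using assms unfolding connected_component_def by blast
  have "continuous_on UNIV (\<lambda>f::nat \<Rightarrow> complex. \<lambda>t. cnj (f t))"
    by (intro continuous_on_coordinatewise_then_product continuous_on_cnj continuous_on_product_coordinates)
  hence "continuous_on T (\<lambda>f::nat \<Rightarrow> complex. \<lambda>t. cnj (f t))"
    by (rule continuous_on_subset) simp
  hence "connected ((\<lambda>f. \<lambda>t. cnj (f t)) ` T)"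
    using T(1) by (rule connected_continuous_image)
  moreover have "(\<lambda>f. \<lambda>t. cnj (f t)) ` T \<subseteq> Omega_cone" using T(2) Omega_cone_cnj by auto
  ultimately show ?thesis
    using T(3,4) by (intro connected_componentI) auto
qed

lemma Omega_cone_re_im:
  assumes "w \<in> Omega_cone"
  defines "X \<equiv> \<lambda>i. Re (w i)" and "Y \<equiv> \<lambda>i. Im (w i)"
  shows "bil Y Y = bil X X" "bil X Y = 0" "bil X X > 0" "\<forall>i\<ge>12. X i = 0 \<and> Y i = 0"
proof -
  have w_eq: "w = (\<lambda>i. complex_of_real (X i) + \<i> * complex_of_real (Y i))"
    and cnj_w_eq: "(\<lambda>i. cnj (w i)) = (\<lambda>i. complex_of_real (X i) + \<i> * complex_of_real (- Y i))"
    by (simp_all add: X_def Y_def complex_eq_iff fun_eq_iff)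
  have "bil w w = complex_of_real (bil X X - bil Y Y) + \<i> * complex_of_real (bil X Y + bil Y X)"
    by (subst (1 2) w_eq) (rule bil_complex)
  moreover have "bil w (\<lambda>i. cnj (w i))
      = complex_of_real (bil X X - bil Y (\<lambda>i. - Y i)) + \<i> * complex_of_real (bil X (\<lambda>i. - Y i) + bil Y X)"
    unfolding cnj_w_eq by (subst w_eq) (rule bil_complex)
  moreover have "bil w w = 0" "0 < Re (bil w (\<lambda>t. cnj (w t)))" "\<forall>i\<ge>12. w i = 0"
    using assms(1) unfolding Omega_cone_def by auto
  ultimately have "bil X X - bil Y Y = 0" "bil X Y + bil Y X = 0" "0 < bil X X + bil Y Y"
    by (simp_all add: complex_eq_iff bil_minus_right)
  then show "bil Y Y = bil X X" "bil X Y = 0" "bil X X > 0"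
    by (simp_all add: bil_sym[of Y X])
  show "\<forall>i\<ge>12. X i = 0 \<and> Y i = 0"
    using \<open>\<forall>i\<ge>12. w i = 0\<close> by (simp add: X_def Y_def)
qed

text \<open>Orthogonal projection onto the positive plane P0 spanned by (1,1,0,...) and (0,0,1,1,0,...).\<close>

definition proj_P0 :: "(nat \<Rightarrow> real) \<Rightarrow> nat \<Rightarrow> real" where
  "proj_P0 Z = (\<lambda>i. if i < 2 then (Z 0 + Z 1) / 2 else if i < 4 then (Z 2 + Z 3) / 2 else 0)"

lemma bil_le_bil_proj_P0: "bil Z Z \<le> bil (proj_P0 Z) (proj_P0 Z)"
proof -
  have "bil Z Z = bil (proj_P0 Z) (proj_P0 Z) - ((Z 0 - Z 1)\<^sup>2 + (Z 2 - Z 3)\<^sup>2 / 2) - 4 * E8_quad (\<lambda>i. Z (i + 4))"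
    by (simp add: bil_expand proj_P0_def E8_quad_def power2_eq_square field_simps)
  moreover have "0 \<le> E8_quad (\<lambda>i. Z (i + 4))" by (rule E8_quad_nonneg)
  moreover have "0 \<le> (Z 0 - Z 1)\<^sup>2 + (Z 2 - Z 3)\<^sup>2 / 2" by simp
  ultimately show ?thesis by linarith
qed

definition deform :: "real \<Rightarrow> (nat \<Rightarrow> real) \<Rightarrow> nat \<Rightarrow> real" where
  "deform t Z = (\<lambda>i. proj_P0 Z i + t * (Z i - proj_P0 Z i))"

lemma deform_0: "deform 0 Z = proj_P0 Z"
  and deform_1: "deform 1 Z = Z"
  by (simp_all add: deform_def)

lemma bil_deform:
  "bil (deform t X) (deform t Y) = bil (proj_P0 X) (proj_P0 Y) + t\<^sup>2 * (bil X Y - bil (proj_P0 X) (proj_P0 Y))"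
  by (simp add: bil_expand deform_def proj_P0_def power2_eq_square field_simps)

lemma deform_lincomb: "deform t (\<lambda>i. a * X i + b * Y i) = (\<lambda>i. a * deform t X i + b * deform t Y i)"
  by (rule ext) (simp add: deform_def proj_P0_def algebra_simps add_divide_distrib)

lemma bil_lincomb2:
  "bil (\<lambda>i. a * X i + b * Y i) (\<lambda>i. a * X i + b * Y i) = a\<^sup>2 * bil X X + 2 * a * b * bil X Y + b\<^sup>2 * bil Y Y"
  by (simp add: bil_add_left bil_add_right bil_scale_left bil_scale_right bil_sym[of Y X]
      power2_eq_square algebra_simps)

lemma deform_pair_positive:
  assumes YY: "bil Y Y = bil X X" and XY: "bil X Y = 0" and XX: "bil X X > 0"
    and t: "0 \<le> t" "t \<le> 1"
  defines "a \<equiv> bil (deform t X) (deform t X)" and "b \<equiv> bil (deform t X) (deform t Y)"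
    and "c \<equiv> bil (deform t Y) (deform t Y)"
  shows "a > 0" "a * c - b\<^sup>2 > 0"
proof -
  have bound: "\<alpha>\<^sup>2 * a + 2 * \<alpha> * \<beta> * b + \<beta>\<^sup>2 * c \<ge> bil X X * (\<alpha>\<^sup>2 + \<beta>\<^sup>2)" for \<alpha> \<beta>
  proof -
    define Z where "Z i = \<alpha> * X i + \<beta> * Y i" for i
    have "bil (deform t Z) (deform t Z) - bil Z Z = (1 - t\<^sup>2) * (bil (proj_P0 Z) (proj_P0 Z) - bil Z Z)"
      by (simp add: bil_deform algebra_simps)
    moreover have "0 \<le> (1 - t\<^sup>2) * (bil (proj_P0 Z) (proj_P0 Z) - bil Z Z)"
      using bil_le_bil_proj_P0[of Z] power_le_one[OF t, of 2] by simp
    ultimately have "bil Z Z \<le> bil (deform t Z) (deform t Z)" by simp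
    thus ?thesis
      using YY XY unfolding Z_def deform_lincomb bil_lincomb2 a_def b_def c_def
      by (simp add: algebra_simps)
  qed
  show "a > 0" using bound[of 1 0] XX by simp
  have "(- b)\<^sup>2 * a + 2 * (- b) * a * b + a\<^sup>2 * c \<ge> bil X X * ((- b)\<^sup>2 + a\<^sup>2)"
    using bound[of "- b" a] by simp
  moreover have "bil X X * ((- b)\<^sup>2 + a\<^sup>2) > 0"
    using XX \<open>a > 0\<close> by (simp add: add_nonneg_pos)
  ultimately have "a * (a * c - b\<^sup>2) > 0" by (simp add: algebra_simps power2_eq_square)
  thus "a * c - b\<^sup>2 > 0" using \<open>a > 0\<close> by (simp add: zero_less_mult_iff)
qed

text \<open>With a, b, c the Gram entries of a positive pair (X, Y), the vectors c X - b Y and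
  sqrt(a c - b^2) Y are orthogonal with equal squares, so their combination with \<i> is isotropic.\<close>

definition period_of_pair :: "(nat \<Rightarrow> real) \<Rightarrow> (nat \<Rightarrow> real) \<Rightarrow> nat \<Rightarrow> complex" where
  "period_of_pair X Y = (\<lambda>i. complex_of_real (bil Y Y * X i - bil X Y * Y i)
      + \<i> * complex_of_real (sqrt (bil X X * bil Y Y - (bil X Y)\<^sup>2) * Y i))"

lemma period_of_pair_in_Omega_cone:
  assumes "\<forall>i\<ge>12. X i = 0 \<and> Y i = 0"
    and "bil X X > 0" and "bil X X * bil Y Y - (bil X Y)\<^sup>2 > 0"
  shows "period_of_pair X Y \<in> Omega_cone"
proof -
  define a b c where "a = bil X X" and "b = bil X Y" and "c = bil Y Y"
  define D where "D = sqrt (a * c - b\<^sup>2)"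
  define U where "U i = c * X i - b * Y i" for i
  define V where "V i = D * Y i" for i
  have c_pos: "c > 0"
    using assms(2,3) unfolding a_def b_def c_def by (smt (verit) mult_nonneg_nonpos zero_le_power2)
  have D2: "D\<^sup>2 = a * c - b\<^sup>2" using assms(3) by (simp add: D_def a_def b_def c_def)
  have UU: "bil U U = c * (a * c - b\<^sup>2)"
    unfolding U_def
    by (simp only: bil_diff_left bil_diff_right bil_scale_left bil_scale_right)
      (simp add: bil_sym[of Y X] a_def b_def c_def power2_eq_square algebra_simps)
  have "bil V V = D\<^sup>2 * c"
    unfolding V_def by (simp add: bil_scale_left bil_scale_right c_def power2_eq_square)
  hence VV: "bil V V = c * (a * c - b\<^sup>2)"
    unfolding D2 by simp
  have UV: "bil U V = 0" "bil V U = 0"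
    unfolding U_def V_def
    by (simp_all only: bil_diff_left bil_diff_right bil_scale_left bil_scale_right)
      (simp_all add: bil_sym[of Y X] b_def c_def algebra_simps)
  have P: "period_of_pair X Y = (\<lambda>i. complex_of_real (U i) + \<i> * complex_of_real (V i))"
    and P_cnj: "(\<lambda>i. cnj (period_of_pair X Y i)) = (\<lambda>i. complex_of_real (U i) + \<i> * complex_of_real (- V i))"
    by (simp_all add: period_of_pair_def U_def V_def D_def a_def b_def c_def)
  have "bil (period_of_pair X Y) (period_of_pair X Y) = 0"
    unfolding P bil_complex UU VV UV by simp
  moreover have "Re (bil (period_of_pair X Y) (\<lambda>t. cnj (period_of_pair X Y t))) = 2 * c * (a * c - b\<^sup>2)"
    unfolding P_cnj by (subst P, simp only: bil_complex) (simp add: bil_minus_right UU VV)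
  moreover have "2 * c * (a * c - b\<^sup>2) > 0"
    using c_pos assms(3) by (simp add: a_def b_def c_def)
  ultimately show ?thesis
    using assms(1) unfolding Omega_cone_def by (simp add: period_of_pair_def)
qed

lemma period_of_pair_orthogonal:
  assumes "bil Y Y = bil X X" "bil X Y = 0" "bil X X > 0"
  shows "period_of_pair X Y = (\<lambda>i. complex_of_real (bil X X) * (complex_of_real (X i) + \<i> * complex_of_real (Y i)))"
  using assms by (simp add: period_of_pair_def power2_eq_square algebra_simps)

lemma period_of_pair_proj_P0:
  "period_of_pair (proj_P0 X) (proj_P0 Y)
   = (\<lambda>i. if i < 2 then period_of_pair (proj_P0 X) (proj_P0 Y) 0
          else if i < 4 then period_of_pair (proj_P0 X) (proj_P0 Y) 2 else 0)"
  by (rule ext) (simp add: period_of_pair_def proj_P0_def)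

lemma bil_P0:
  "bil (\<lambda>i. if i < 2 then \<alpha> else if i < 4 then \<beta> else 0) (\<lambda>i. if i < 2 then \<alpha>' else if i < 4 then \<beta>' else 0)
   = 4 * \<alpha> * \<alpha>' + 2 * \<beta> * \<beta>'"
  by (simp add: bil_expand algebra_simps)

definition P0_period :: "nat \<Rightarrow> complex" where
  "P0_period = (\<lambda>i. if i < 2 then 1 else if i < 4 then \<i> * complex_of_real (sqrt 2) else 0)"

lemma sqrt2_complex_square: "complex_of_real (sqrt 2) * complex_of_real (sqrt 2) = 2"
  by (simp flip: of_real_mult)

lemma P0_period_in_Omega_cone: "P0_period \<in> Omega_cone"
proof -
  have "(\<lambda>t. cnj (P0_period t)) = (\<lambda>i. if i < 2 then 1 else if i < 4 then - \<i> * complex_of_real (sqrt 2) else 0)"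
    by (rule ext) (simp add: P0_period_def)
  thus ?thesis
    unfolding Omega_cone_def P0_period_def
    by (simp add: bil_P0 algebra_simps sqrt2_complex_square)
qed

lemma Omega_cone_P0_cases:
  assumes "(\<lambda>i. if i < 2 then \<alpha> else if i < 4 then \<beta> else 0) \<in> Omega_cone"
  shows "\<alpha> \<noteq> 0 \<and> ((\<lambda>i. if i < 2 then \<alpha> else if i < 4 then \<beta> else 0) = (\<lambda>i. \<alpha> * P0_period i) \<or>
           (\<lambda>i. if i < 2 then \<alpha> else if i < 4 then \<beta> else 0) = (\<lambda>i. \<alpha> * cnj (P0_period i)))"
proof -
  have "(\<lambda>t::nat. cnj (if t < 2 then \<alpha> else if t < 4 then \<beta> else 0))
      = (\<lambda>i. if i < 2 then cnj \<alpha> else if i < 4 then cnj \<beta> else 0)"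
    by (rule ext) simp
  hence iso: "4 * \<alpha> * \<alpha> + 2 * \<beta> * \<beta> = 0" and pos: "0 < Re (4 * \<alpha> * cnj \<alpha> + 2 * \<beta> * cnj \<beta>)"
    using assms unfolding Omega_cone_def by (simp_all add: bil_P0)
  have "\<alpha> \<noteq> 0" using iso pos by auto
  have "(\<beta> - \<i> * complex_of_real (sqrt 2) * \<alpha>) * (\<beta> + \<i> * complex_of_real (sqrt 2) * \<alpha>)
      = (4 * \<alpha> * \<alpha> + 2 * \<beta> * \<beta>) / 2"
    by (simp add: algebra_simps sqrt2_complex_square)
  hence "\<beta> = \<i> * complex_of_real (sqrt 2) * \<alpha> \<or> \<beta> = - (\<i> * complex_of_real (sqrt 2) * \<alpha>)"
    using iso by (auto simp add: add_eq_0_iff)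
  with \<open>\<alpha> \<noteq> 0\<close> show ?thesis
    by (auto simp: P0_period_def fun_eq_iff)
qed

text \<open>Shrinking the components of Re w and Im w orthogonal to P0 keeps their Gram matrix positive
  definite, so period_of_pair traces a path in the period domain from a multiple of w to a period
  in P0 (x) C.\<close>

lemma Omega_cone_connected_to_P0:
  assumes w: "w \<in> Omega_cone"
  obtains \<alpha> \<beta> where "connected_component Omega_cone w (\<lambda>i. if i < 2 then \<alpha> else if i < 4 then \<beta> else 0)"
proof -
  define X Y where "X = (\<lambda>i. Re (w i))" and "Y = (\<lambda>i. Im (w i))"
  note XY = Omega_cone_re_im[OF w, folded X_def Y_def]
  define g where "g t = period_of_pair (deform t X) (deform t Y)" for t
  have "g ` {0..1} \<subseteq> Omega_cone"
  proof clarify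
    fix t :: real assume "t \<in> {0..1}"
    hence "bil (deform t X) (deform t X) > 0"
      "bil (deform t X) (deform t X) * bil (deform t Y) (deform t Y) - (bil (deform t X) (deform t Y))\<^sup>2 > 0"
      using deform_pair_positive[OF XY(1-3)] by auto
    moreover have "\<forall>i\<ge>12. deform t X i = 0 \<and> deform t Y i = 0"
      using XY(4) by (simp add: deform_def proj_P0_def X_def Y_def)
    ultimately show "g t \<in> Omega_cone"
      unfolding g_def by (intro period_of_pair_in_Omega_cone)
  qed
  moreover have "continuous_on {0..1} g"
    unfolding g_def period_of_pair_def bil_deform
    by (intro continuous_on_coordinatewise_then_product) (simp add: deform_def; intro continuous_intros)
  ultimately have g_path: "connected_component Omega_cone (g 0) (g 1)"
    by (intro connected_componentI[of "g ` {0..1}"] connected_continuous_image) auto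
  have "g 1 = period_of_pair X Y"
    by (simp add: g_def deform_1)
  also have "\<dots> = (\<lambda>i. complex_of_real (bil X X) * w i)"
    unfolding period_of_pair_orthogonal[OF XY(1-3)] by (simp add: X_def Y_def flip: complex_eq)
  finally have "connected_component Omega_cone w (g 1)"
    using connected_component_Omega_cone_scale[OF w] XY(3) by simp
  with g_path have w_g0: "connected_component Omega_cone w (g 0)"
    by (meson connected_component_sym connected_component_trans)
  have g0: "g 0 = (\<lambda>i. if i < 2 then g 0 0 else if i < 4 then g 0 2 else 0)"
    unfolding g_def deform_0 by (rule period_of_pair_proj_P0)
  from w_g0 show thesis
    by (rule that[of "g 0 0" "g 0 2", folded g0])
qed

lemma Omega_cone_connected_to_P0_period:
  assumes w: "w \<in> Omega_cone"
  shows "connected_component Omega_cone w P0_period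
    \<or> connected_component Omega_cone w (\<lambda>i. cnj (P0_period i))"
proof -
  obtain \<alpha> \<beta> where w_v: "connected_component Omega_cone w (\<lambda>i. if i < 2 then \<alpha> else if i < 4 then \<beta> else 0)"
    using Omega_cone_connected_to_P0[OF w] .
  have "(\<lambda>i. if i < 2 then \<alpha> else if i < 4 then \<beta> else 0) \<in> Omega_cone"
    using connected_component_in[OF w_v] by blast
  hence "\<alpha> \<noteq> 0 \<and> ((\<lambda>i. if i < 2 then \<alpha> else if i < 4 then \<beta> else 0) = (\<lambda>i. \<alpha> * P0_period i)
      \<or> (\<lambda>i. if i < 2 then \<alpha> else if i < 4 then \<beta> else 0) = (\<lambda>i. \<alpha> * cnj (P0_period i)))"
    by (rule Omega_cone_P0_cases)
  thus ?thesis
  proof (elim conjE disjE)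
    assume "\<alpha> \<noteq> 0" and v: "(\<lambda>i. if i < 2 then \<alpha> else if i < 4 then \<beta> else 0) = (\<lambda>i. \<alpha> * P0_period i)"
    have "connected_component Omega_cone P0_period (\<lambda>i. \<alpha> * P0_period i)"
      using connected_component_Omega_cone_scale P0_period_in_Omega_cone \<open>\<alpha> \<noteq> 0\<close> by blast
    moreover from w_v have "connected_component Omega_cone w (\<lambda>i. \<alpha> * P0_period i)"
      unfolding v .
    ultimately show ?thesis
      by (meson connected_component_sym connected_component_trans)
  next
    assume "\<alpha> \<noteq> 0" and v: "(\<lambda>i. if i < 2 then \<alpha> else if i < 4 then \<beta> else 0) = (\<lambda>i. \<alpha> * cnj (P0_period i))"
    have "connected_component Omega_cone (\<lambda>i. cnj (P0_period i)) (\<lambda>i. \<alpha> * cnj (P0_period i))"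
      using connected_component_Omega_cone_scale P0_period_in_Omega_cone Omega_cone_cnj \<open>\<alpha> \<noteq> 0\<close>
      by blast
    moreover from w_v have "connected_component Omega_cone w (\<lambda>i. \<alpha> * cnj (P0_period i))"
      unfolding v .
    ultimately show ?thesis
      by (meson connected_component_sym connected_component_trans)
  qed
qed

lemma Omega_cone_component_or_cnj:
  assumes "w0 \<in> Omega_cone" "w1 \<in> Omega_cone"
  shows "connected_component Omega_cone w0 w1 \<or> connected_component Omega_cone w0 (\<lambda>i. cnj (w1 i))"
proof -
  have "connected_component Omega_cone (\<lambda>i. cnj (w1 i)) (\<lambda>i. cnj (P0_period i))"
    if "connected_component Omega_cone w1 P0_period"
    using connected_component_Omega_cone_cnj[OF that] .
  moreover have "connected_component Omega_cone (\<lambda>i. cnj (w1 i)) P0_period"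
    if "connected_component Omega_cone w1 (\<lambda>i. cnj (P0_period i))"
    using connected_component_Omega_cone_cnj[OF that] by simp
  ultimately show ?thesis
    using Omega_cone_connected_to_P0_period[OF assms(1)] Omega_cone_connected_to_P0_period[OF assms(2)]
    by (meson connected_component_sym connected_component_trans)
qed

lemma Hyp_union_cnj:
  assumes "w \<in> Hyp_union"
  shows "(\<lambda>t. cnj (w t)) \<in> Hyp_union"
proof -
  have "bil (\<lambda>t. cnj (w t)) (ofv d) = cnj (bil w (ofv d))" for d
    using bil_cnj[of w "ofv d"] by (simp add: ofv_def)
  with assms show ?thesis
    unfolding Hyp_union_def by auto
qed

lemma Omega_Kpart_cnj: "w \<in> Omega_Kpart k \<Longrightarrow> (\<lambda>t. cnj (w t)) \<in> Omega_Kpart k"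
  unfolding Omega_Kpart_def span_coef_eq_range by (auto simp: cnj_lincomb)

section \<open>Patching\<close>

definition coord_vec :: "(nat \<Rightarrow> nat \<Rightarrow> int) \<Rightarrow> (nat \<Rightarrow> nat \<Rightarrow> int) \<Rightarrow> (nat \<Rightarrow> int) \<Rightarrow> (nat \<Rightarrow> int)
    \<Rightarrow> nat \<Rightarrow> 'a::field_char_0" where
  "coord_vec k e q p = (\<lambda>t. lincomb 4 (\<lambda>i. of_int (q i) / 2) k t + lincomb 8 (\<lambda>i. of_int (p i) / 2) e t)"

lemma of_rat_coord_vec: "(\<lambda>t. of_rat (coord_vec k e q p t)) = coord_vec k e q p"
  by (simp add: coord_vec_def of_rat_add of_rat_lincomb of_rat_divide)

lemma ofv_of_rat: "(ofv d :: nat \<Rightarrow> 'a::field_char_0) = (\<lambda>t. of_rat (ofv d t))"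
  by (simp add: ofv_def)

lemma four_dvd_of_even_coords:
  fixes q p :: "nat \<Rightarrow> int"
  assumes "\<forall>i<4. even (q i)" and "\<forall>i<8. even (p i)"
  shows "4 dvd q 0 * q 1 + q 2 * q 3 - E8_quad p"
proof -
  have prod: "4 dvd x * y" if "even x" "even y" for x y :: int
    using that by (auto elim!: evenE)
  show ?thesis
    unfolding E8_quad_def using assms by (intro dvd_add dvd_diff prod) simp_all
qed

locale patching =
  fixes k e :: "nat \<Rightarrow> nat \<Rightarrow> int" and d1 d2 :: "nat \<Rightarrow> rat"
  assumes data: "patching_setup k e d1 d2"
begin

lemma k_Lam: "\<forall>i<4. k i \<in> Lam"
  and k_gram: "\<forall>i<4. \<forall>j<4. bil (k i) (k j) = U2U2_gram i j"
  and e_gram: "\<forall>i<8. \<forall>j<8. bil (e i) (e j) = E8m2_gram i j"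
  and e_orth_k: "orth_compl (zspan 4 k) = zspan 8 e"
  and d1_span: "d1 \<in> span_coef 4 k"
  and d1_integral: "\<forall>y\<in>zspan 4 k. bil d1 (ofv y) \<in> \<int>"
  and d1_notin: "d1 \<notin> ofv ` zspan 4 k"
  and d2_span: "d2 \<in> span_coef 8 e"
  and d2_notin: "d2 \<notin> ofv ` zspan 8 e"
  and Lam_eq: "ofv ` Lam = {(\<lambda>t. of_int n * (d1 t + d2 t) + of_int (y t) + of_int (z t)) | n y z.
                   y \<in> zspan 4 k \<and> z \<in> zspan 8 e}"
  using data unfolding patching_setup_def by auto

lemma k_in_zspan: "j < 4 \<Longrightarrow> k j \<in> zspan 4 k"
  and e_in_zspan: "j' < 8 \<Longrightarrow> e j' \<in> zspan 8 e"
  unfolding zspan_eq_range by (auto intro: lincomb_basis)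

lemma bil_k_e: "i < 4 \<Longrightarrow> j < 8 \<Longrightarrow> bil (k i) (e j) = 0"
  using e_in_zspan[of j] k_in_zspan[of i] e_orth_k bil_sym[of "k i"]
  unfolding orth_compl_def by auto

lemma bil_lincomb_k: "bil (lincomb 4 c k) (lincomb 4 c' k) = formK c c'"
proof -
  have "bil (lincomb 4 c k) (lincomb 4 c' k) = (\<Sum>i<4. \<Sum>j<4. c i * c' j * of_int (U2U2_gram i j))"
    unfolding bil_lincomb using k_gram by (intro sum.cong) auto
  thus ?thesis
    by (simp add: U2U2_gram_def formK_def numeral_eq_Suc doubleton_eq_iff algebra_simps)
qed

lemma bil_lincomb_e: "bil (lincomb 8 c e) (lincomb 8 c e) = - 4 * E8_quad c"
proof -
  have "bil (lincomb 8 c e) (lincomb 8 c e) = (\<Sum>i<8. \<Sum>j<8. c i * c j * of_int (E8m2_gram i j))"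
    unfolding bil_lincomb using e_gram by (intro sum.cong) auto
  thus ?thesis
    by (simp add: E8m2_gram_def E8_edge_def E8_quad_def numeral_eq_Suc doubleton_eq_iff insert_commute
        algebra_simps)
qed

lemma bil_lincomb_k_e: "bil (lincomb 4 c k) (lincomb 8 c' e) = 0"
  and bil_lincomb_e_k: "bil (lincomb 8 c' e) (lincomb 4 c k) = 0"
  by (simp_all add: bil_lincomb bil_k_e bil_sym[of "e _"])

lemma bil_coord_vec:
  "bil (coord_vec k e q p) (coord_vec k e q p) = (of_int (q 0 * q 1 + q 2 * q 3 - E8_quad p) :: 'a::field_char_0)"
  unfolding coord_vec_def
  by (simp add: bil_add_left bil_add_right bil_lincomb_k bil_lincomb_k_e bil_lincomb_e_k bil_lincomb_e
      formK_half E8_quad_half)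

lemma bil_lincomb_k_coord_vec: "bil (lincomb 4 \<gamma> k) (coord_vec k e q p) = formK \<gamma> (\<lambda>i. of_int (q i) / 2)"
  unfolding coord_vec_def by (simp add: bil_add_right bil_lincomb_k bil_lincomb_k_e)

lemma bil_self_of_coords:
  assumes "ofv d = (coord_vec k e q p :: nat \<Rightarrow> rat)"
  shows "bil d d = q 0 * q 1 + q 2 * q 3 - E8_quad p"
proof -
  have "(of_int (bil d d) :: rat) = bil (ofv d) (ofv d)"
    by (simp add: ofv_def bil_of_int)
  also have "\<dots> = of_int (q 0 * q 1 + q 2 * q 3 - E8_quad p)"
    unfolding assms by (rule bil_coord_vec)
  finally show ?thesis by (simp only: of_int_eq_iff)
qed

lemma bil_K_of_coords:
  assumes "ofv d = (coord_vec k e q p :: nat \<Rightarrow> rat)"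
  shows "bil (lincomb 4 \<gamma> k) (ofv d) = formK \<gamma> (\<lambda>i. of_int (q i) / 2 :: complex)"
  unfolding ofv_of_rat[where 'a=complex] assms of_rat_coord_vec by (rule bil_lincomb_k_coord_vec)

lemma K_period_in_Omega_cone:
  fixes s t :: "nat \<Rightarrow> int"
  assumes "formK s s = formK t t" "formK s s > 0" "formK s t = 0"
  shows "lincomb 4 (\<lambda>i. of_int (s i) + \<i> * of_int (t i)) k \<in> Omega_cone"
proof -
  let ?\<gamma> = "\<lambda>i. of_int (s i) + \<i> * of_int (t i) :: complex"
  have "formK ?\<gamma> ?\<gamma> = of_int (formK s s - formK t t) + \<i> * of_int (formK s t + formK t s)"
    "formK ?\<gamma> (\<lambda>i. cnj (?\<gamma> i)) = of_int (formK s s + formK t t) + \<i> * of_int (formK t s - formK s t)"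
    by (simp_all add: formK_def algebra_simps)
  with assms show ?thesis
    unfolding Omega_cone_def
    by (simp add: bil_lincomb_k cnj_lincomb lincomb_outside[OF k_Lam] formK_sym[of t s])
qed

lemma K_period_coords:
  assumes "lincomb 4 \<gamma> k \<in> Omega_cone"
  shows "formK \<gamma> \<gamma> = 0" "0 < Re (formK \<gamma> (\<lambda>i. cnj (\<gamma> i)))"
  using assms unfolding Omega_cone_def by (simp_all add: bil_lincomb_k cnj_lincomb)

lemma d1_coords:
  obtains a :: "nat \<Rightarrow> int" where "d1 = lincomb 4 (\<lambda>i. of_int (a i) / 2) k"
proof -
  obtain c where c: "d1 = lincomb 4 c k"
    using d1_span unfolding span_coef_eq_range by blast
  have pairing: "bil d1 (ofv (k j)) = formK c (\<lambda>i. if i = j then 1 else 0)" if "j < 4" for j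
  proof -
    have "ofv (k j) = (lincomb 4 (\<lambda>i. if i = j then 1 else 0) k :: nat \<Rightarrow> rat)"
      using lincomb_basis[OF that, of k] ofv_lincomb[of 4 "\<lambda>i. if i = j then 1 else 0" k]
      by (simp add: if_distrib cong: if_cong)
    thus ?thesis unfolding c by (simp add: bil_lincomb_k)
  qed
  have "formK c (\<lambda>i. if i = j then 1 else 0) \<in> \<int>" if "j < 4" for j
    using d1_integral k_in_zspan[OF that] pairing[OF that] by metis
  from this[of 0] this[of 1] this[of 2] this[of 3]
  have "2 * c 1 \<in> \<int>" "2 * c 0 \<in> \<int>" "2 * c 3 \<in> \<int>" "2 * c 2 \<in> \<int>"
    by (simp_all add: formK_def)
  hence "c i = of_int \<lfloor>2 * c i\<rfloor> / 2" if "i < 4" for i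
    using that by (auto simp: less_Suc_eq numeral_eq_Suc)
  hence "d1 = lincomb 4 (\<lambda>i. of_int \<lfloor>2 * c i\<rfloor> / 2) k"
    unfolding c by (intro lincomb_cong) auto
  thus thesis by (rule that)
qed

lemma d2_coords:
  assumes d1: "d1 = lincomb 4 (\<lambda>i. of_int (a i) / 2) k"
  obtains m :: "nat \<Rightarrow> int" where "d2 = lincomb 8 (\<lambda>i. of_int (m i) / 2) e"
proof -
  have "(\<lambda>t. d1 t + d2 t) \<in> ofv ` Lam"
    unfolding Lam_eq using zero_in_zspan by (intro CollectI exI[of _ 1]) force
  then obtain D where D: "D \<in> Lam" "ofv D = (\<lambda>t. d1 t + d2 t)"
    by (metis imageE)
  define x where "x t = 2 * D t - lincomb 4 a k t" for t
  have ofv_x: "ofv x = (\<lambda>t. 2 * d2 t)"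
  proof -
    have "(\<lambda>t. 2 * d1 t) = lincomb 4 (\<lambda>i. of_int (a i)) k"
      unfolding d1 lincomb_scale by (intro lincomb_cong) simp
    with D(2) show ?thesis
      by (simp add: x_def ofv_def of_int_lincomb fun_eq_iff)
  qed
  have "x \<in> orth_compl (zspan 4 k)"
    unfolding orth_compl_def
  proof (intro CollectI conjI ballI)
    show "x \<in> Lam" using D(1) lincomb_outside[OF k_Lam] by (auto simp: x_def Lam_def)
    fix y assume "y \<in> zspan 4 k"
    then obtain cy where y: "y = lincomb 4 cy k" unfolding zspan_eq_range by blast
    obtain c2 where d2: "d2 = lincomb 8 c2 e" using d2_span unfolding span_coef_eq_range by blast
    have "(of_int (bil x y) :: rat) = bil (ofv x) (ofv y)" by (simp add: ofv_def bil_of_int)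
    also have "\<dots> = 0"
      unfolding ofv_x y ofv_lincomb bil_scale_left d2 bil_lincomb_e_k by simp
    finally show "bil x y = 0" by simp
  qed
  hence "x \<in> zspan 8 e" by (simp only: e_orth_k)
  then obtain m where m: "x = lincomb 8 m e"
    unfolding zspan_eq_range by blast
  have "d2 = (\<lambda>t. (1 / 2) * ofv x t)"
    using ofv_x by (simp add: fun_eq_iff)
  also have "\<dots> = lincomb 8 (\<lambda>i. of_int (m i) / 2) e"
    unfolding m ofv_lincomb lincomb_scale by simp
  finally have "d2 = lincomb 8 (\<lambda>i. of_int (m i) / 2) e" .
  thus thesis by (rule that)
qed

end

locale patching_coords = patching +
  fixes a m :: "nat \<Rightarrow> int"
  assumes d1_eq: "d1 = lincomb 4 (\<lambda>i. of_int (a i) / 2) k"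
    and d2_eq: "d2 = lincomb 8 (\<lambda>i. of_int (m i) / 2) e"

lemma (in patching) patching_coords_exist:
  obtains a m where "patching_coords k e d1 d2 a m"
  using d1_coords d2_coords
  by (metis patching_axioms patching_coords.intro patching_coords_axioms.intro)

context patching_coords
begin

lemma a_odd_entry: "\<exists>i<4. odd (a i)"
  using d1_notin half_lincomb_in_ofv_zspan[of 4 a k] unfolding d1_eq by blast

lemma m_odd_entry: "\<exists>i<8. odd (m i)"
  using d2_notin half_lincomb_in_ofv_zspan[of 8 m e] unfolding d2_eq by blast

lemma bil_d1_d1: "bil d1 d1 = of_int (a 0 * a 1 + a 2 * a 3)"
  unfolding d1_eq bil_lincomb_k by (rule formK_half)

lemma odd_type_imp_odd: "odd_type d1 \<Longrightarrow> odd (a 0 * a 1 + a 2 * a 3)"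
  and even_type_imp_even: "even_type d1 \<Longrightarrow> even (a 0 * a 1 + a 2 * a 3)"
  unfolding odd_type_def even_type_def bil_d1_d1 by (auto simp only: of_int_eq_iff) simp_all

lemma Lam_coords:
  assumes "d \<in> Lam"
  obtains n :: int and y z :: "nat \<Rightarrow> int"
  where "ofv d = (coord_vec k e (\<lambda>i. n * a i + 2 * y i) (\<lambda>i. n * m i + 2 * z i) :: nat \<Rightarrow> rat)"
proof -
  have "(ofv d :: nat \<Rightarrow> rat) \<in> ofv ` Lam" using assms by (rule imageI)
  then obtain n y z where
    "ofv d = (\<lambda>t. of_int n * (d1 t + d2 t) + of_int (y t) + of_int (z t))" "y \<in> zspan 4 k" "z \<in> zspan 8 e"
    unfolding Lam_eq mem_Collect_eq by blast
  moreover obtain yc zc where "y = lincomb 4 yc k" "z = lincomb 8 zc e"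
    using \<open>y \<in> zspan 4 k\<close> \<open>z \<in> zspan 8 e\<close> unfolding zspan_eq_range by blast
  ultimately have "ofv d = (\<lambda>t. of_int n * (d1 t + d2 t) + of_int (lincomb 4 yc k t) + of_int (lincomb 8 zc e t))"
    by simp
  also have "\<dots> = coord_vec k e (\<lambda>i. n * a i + 2 * yc i) (\<lambda>i. n * m i + 2 * zc i)"
    by (simp add: coord_vec_def d1_eq d2_eq lincomb_def of_int_sum sum.distrib sum_distrib_left
        add_divide_distrib algebra_simps fun_eq_iff)
  finally show thesis by (rule that)
qed

lemma Lam_of_coords:
  assumes "\<forall>i<4. q i mod 2 = a i mod 2" and "\<forall>i<8. p i mod 2 = m i mod 2"
  obtains d where "d \<in> Lam" "ofv d = (coord_vec k e q p :: nat \<Rightarrow> rat)"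
proof -
  define y z where "y = lincomb 4 (\<lambda>i. (q i - a i) div 2) k" and "z = lincomb 8 (\<lambda>i. (p i - m i) div 2) e"
  have ev_q: "even (q i - a i)" if "i < 4" for i
    using assms(1) that by (metis mod_eq_dvd_iff)
  have ev_p: "even (p i - m i)" if "i < 8" for i
    using assms(2) that by (metis mod_eq_dvd_iff)
  have "coord_vec k e q p = (\<lambda>t. of_int 1 * (d1 t + d2 t) + of_int (y t) + of_int (z t) :: rat)"
  proof -
    have half: "(of_int x / 2 :: rat) = of_int y / 2 + of_int ((x - y) div 2)" if "even (x - y)" for x y
      using of_int_div_2[OF that, where 'a=rat] by (simp add: field_simps)
    have "lincomb 4 (\<lambda>i. of_int (q i) / 2) k
        = (lincomb 4 (\<lambda>i. of_int (a i) / 2 + of_int ((q i - a i) div 2)) k :: nat \<Rightarrow> rat)"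
      by (rule lincomb_cong, rule half, erule ev_q)
    moreover have "lincomb 8 (\<lambda>i. of_int (p i) / 2) e
        = (lincomb 8 (\<lambda>i. of_int (m i) / 2 + of_int ((p i - m i) div 2)) e :: nat \<Rightarrow> rat)"
      by (rule lincomb_cong, rule half, erule ev_p)
    ultimately show ?thesis
      by (simp add: coord_vec_def d1_eq d2_eq y_def z_def of_int_lincomb lincomb_def sum.distrib algebra_simps
          fun_eq_iff)
  qed
  moreover have "y \<in> zspan 4 k" "z \<in> zspan 8 e" unfolding y_def z_def zspan_eq_range by blast+
  ultimately have "\<exists>n y z. coord_vec k e q p = (\<lambda>t. of_int n * (d1 t + d2 t) + of_int (y t) + of_int (z t))
      \<and> y \<in> zspan 4 k \<and> z \<in> zspan 8 e"
    by blast
  hence "coord_vec k e q p \<in> (ofv ` Lam :: (nat \<Rightarrow> rat) set)"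
    unfolding Lam_eq mem_Collect_eq .
  then obtain d where "coord_vec k e q p = (ofv d :: nat \<Rightarrow> rat)" "d \<in> Lam" by (rule imageE)
  thus thesis using that by simp
qed

lemma E8_quad_m_mod_2: "E8_quad m mod 2 = (a 0 * a 1 + a 2 * a 3) mod 2"
proof -
  obtain D where D: "D \<in> Lam" "ofv D = (coord_vec k e a m :: nat \<Rightarrow> rat)"
    using Lam_of_coords by blast
  have "even (a 0 * a 1 + a 2 * a 3 - E8_quad m)"
    using even_bil_self[of D] unfolding bil_self_of_coords[OF D(2)] .
  thus ?thesis by (simp add: mod_eq_dvd_iff dvd_diff_commute)
qed

lemma odd_type_Hyp_union_meets_component:
  assumes "odd_type d1" and w0: "w0 \<in> Omega_cone"
  shows "Hyp_union \<inter> (connected_component_set Omega_cone w0 \<inter> Omega_Kpart k) \<noteq> {}"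
proof -
  have "odd (a 0 * a 1 + a 2 * a 3)"
    using assms(1) by (rule odd_type_imp_odd)
  hence "odd (E8_quad m)"
    using E8_quad_m_mod_2 by (metis odd_iff_mod_2_eq_one)
  then obtain r :: "nat \<Rightarrow> int" where r: "E8_quad r = 1" "\<forall>i<8. r i mod 2 = m i mod 2"
    by (rule E8_root_in_odd_class)
  obtain A s t :: "nat \<Rightarrow> int" where A: "\<forall>i<4. A i mod 2 = a i mod 2" "A 0 * A 1 + A 2 * A 3 = -1"
    and st: "formK s s = 4" "formK t t = 4" "formK s t = 0" "formK s A = 0" "formK t A = 0"
    using formK_negative_vector_in_odd_class[OF \<open>odd (a 0 * a 1 + a 2 * a 3)\<close>] by blast
  obtain d where d: "d \<in> Lam" "ofv d = (coord_vec k e A r :: nat \<Rightarrow> rat)"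
    using Lam_of_coords[OF A(1) r(2)] by blast
  have root: "bil d d = -2"
    using A(2) r(1) by (simp add: bil_self_of_coords[OF d(2)])
  define \<omega> where "\<omega> = lincomb 4 (\<lambda>i. of_int (s i) + \<i> * of_int (t i)) k"
  have "bil \<omega> (ofv d) = 0"
    unfolding \<omega>_def bil_K_of_coords[OF d(2)] formK_gaussian_half st(4,5) by simp
  hence "\<omega> \<in> Hyp_union \<inter> Omega_Kpart k"
    using d(1) root unfolding Hyp_union_def Omega_Kpart_def span_coef_eq_range \<omega>_def by blast
  moreover have "\<omega> \<in> Omega_cone"
    unfolding \<omega>_def using st by (intro K_period_in_Omega_cone) simp_all
  ultimately show ?thesis
    using Omega_cone_component_or_cnj[OF w0] Hyp_union_cnj Omega_Kpart_cnj by blast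
qed

lemma K_part_of_root_orth_period:
  assumes "lincomb 4 \<gamma> k \<in> Omega_cone" and "ofv d = (coord_vec k e q p :: nat \<Rightarrow> rat)"
    and "bil (lincomb 4 \<gamma> k) (ofv d) = 0"
  shows "q 0 * q 1 + q 2 * q 3 < 0 \<or> (\<forall>i<4. q i = 0)"
proof -
  define u where "u i = real_of_int (q i) / 2" for i
  have "formK \<gamma> (\<lambda>i. complex_of_real (u i)) = 0"
    using assms(3) unfolding bil_K_of_coords[OF assms(2)] by (simp add: u_def)
  hence "formK u u < 0 \<or> (\<forall>i<4. u i = 0)"
    using formK_neg_on_orth_of_period K_period_coords[OF assms(1)] by blast
  moreover have "formK u u = of_int (q 0 * q 1 + q 2 * q 3)"
    unfolding u_def by (rule formK_half)
  ultimately show ?thesis by (auto simp: u_def simp del: of_int_add of_int_mult)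
qed

lemma coset_root_K_part_not_nonpositive:
  assumes "even (a 0 * a 1 + a 2 * a 3)"
    and q_mod: "\<forall>i. q i mod 2 = a i mod 2" and p_mod: "\<forall>i. p i mod 2 = m i mod 2"
    and root: "q 0 * q 1 + q 2 * q 3 - E8_quad p = -2"
    and K_neg: "q 0 * q 1 + q 2 * q 3 < 0 \<or> (\<forall>i<4. q i = 0)"
  shows False
proof -
  obtain i where "i < 4" "odd (a i)" using a_odd_entry by blast
  hence "q 0 * q 1 + q 2 * q 3 < 0"
    using K_neg q_mod[THEN spec, of i] by (auto simp: odd_iff_mod_2_eq_one)
  moreover have "(q 0 * q 1 + q 2 * q 3) mod 2 = (a 0 * a 1 + a 2 * a 3) mod 2"
    using q_mod by (intro mod_add_cong mod_mult_cong) simp_all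
  hence "even (q 0 * q 1 + q 2 * q 3)"
    using assms(1) by (simp add: even_iff_mod_2_eq_zero)
  moreover have "x \<le> -2" if "even x" "x < 0" for x :: int
    using that by presburger
  ultimately have "E8_quad p \<le> 0"
    using root by fastforce
  moreover have "E8_quad (\<lambda>i. rat_of_int (p i)) = of_int (E8_quad p)"
    by (simp add: E8_quad_def)
  ultimately have "p i = 0" if "i < 8" for i
    using E8_quad_le_0_imp_zero[of "\<lambda>i. rat_of_int (p i)" i] that by simp
  hence "\<forall>i<8. even (m i)"
    using p_mod by (metis even_iff_mod_2_eq_zero mod_0)
  thus False using m_odd_entry by blast
qed

lemma even_type_Hyp_union_avoids_K_periods:
  assumes "even_type d1" and w: "w \<in> Omega_cone" "w \<in> Omega_Kpart k" "w \<in> Hyp_union"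
  shows False
proof -
  obtain \<gamma> where w_eq: "w = lincomb 4 \<gamma> k"
    using w(2) unfolding Omega_Kpart_def span_coef_eq_range by blast
  obtain d where d: "d \<in> Lam" "bil d d = -2" "bil w (ofv d) = 0"
    using w(3) unfolding Hyp_union_def by blast
  obtain n y z where "ofv d = (coord_vec k e (\<lambda>i. n * a i + 2 * y i) (\<lambda>i. n * m i + 2 * z i) :: nat \<Rightarrow> rat)"
    using Lam_coords[OF d(1)] .
  moreover define q p where "q i = n * a i + 2 * y i" and "p i = n * m i + 2 * z i" for i
  ultimately have d_coords: "ofv d = (coord_vec k e q p :: nat \<Rightarrow> rat)"
    by (simp add: q_def[abs_def] p_def[abs_def])
  have root: "q 0 * q 1 + q 2 * q 3 - E8_quad p = -2"
    using d(2) unfolding bil_self_of_coords[OF d_coords] .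
  have K_neg: "q 0 * q 1 + q 2 * q 3 < 0 \<or> (\<forall>i<4. q i = 0)"
    using w(1) d(3) unfolding w_eq by (rule K_part_of_root_orth_period[OF _ d_coords])
  show False
  proof (cases "even n")
    case True
    hence "4 dvd q 0 * q 1 + q 2 * q 3 - E8_quad p"
      by (intro four_dvd_of_even_coords) (simp_all add: q_def p_def)
    thus False unfolding root by simp
  next
    case False
    then obtain n' where "n = 2 * n' + 1" by (rule oddE)
    hence "q i = a i + 2 * (n' * a i + y i)" "p i = m i + 2 * (n' * m i + z i)" for i
      by (simp_all add: q_def p_def algebra_simps)
    hence mods: "\<forall>i. q i mod 2 = a i mod 2" "\<forall>i. p i mod 2 = m i mod 2"
      by (simp_all only: mod_mult_self2 simp_thms)
    show False
      by (rule coset_root_K_part_not_nonpositive[OF even_type_imp_even[OF assms(1)] mods root K_neg])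
  qed
qed

end

theorem proposition3p13:
  fixes k e :: "nat \<Rightarrow> nat \<Rightarrow> int" and d1 d2 :: "nat \<Rightarrow> rat" and w0 :: "nat \<Rightarrow> complex"
  assumes "patching_setup k e d1 d2"
    and "w0 \<in> Omega_cone"
  shows "(odd_type d1 \<longrightarrow>
            Hyp_union \<inter> (connected_component_set Omega_cone w0 \<inter> Omega_Kpart k) \<noteq> {}) \<and>
         (even_type d1 \<longrightarrow>
            Hyp_union \<inter> (connected_component_set Omega_cone w0 \<inter> Omega_Kpart k) = {})"
proof -
  interpret patching k e d1 d2
    using assms(1) by unfold_locales
  obtain a m where "patching_coords k e d1 d2 a m"
    by (rule patching_coords_exist)
  then interpret patching_coords k e d1 d2 a m .
  show ?thesis
    using odd_type_Hyp_union_meets_component[OF _ assms(2)] even_type_Hyp_union_avoids_K_periods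
      connected_component_in
    by blast
qed

end
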